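(* Let $B$ be an abelian group and $f\colon\mathbb{Z}^2\to B$ a function satisfying, for all $k,l\in\mathbb{Z}$, $$f(k+1,l)+f(k,l+1)+f(k-1,l-1)=f(k-1,l)+f(k,l-1)+f(k+1,l+1).$$ Then there exist functions $\kappa,\lambda,\mu\colon\mathbb{Z}\to B$ such that $f(k,l)=\kappa(k)+\lambda(l)+\mu(k-l)$ for all $k,l\in\mathbb{Z}$. *)

theory Defs
  imports Main
begin

end

theory Submission
  imports Defs
begin

text \<open>The diagonal difference D k l = f (k + 1) (l + 1) - f k l has vanishing mixed second
  difference by the hypothesis, so D k l = a k + b l. Summing a and b yields \<kappa> and \<lambda> such
  that f k l - \<kappa> k - \<lambda> l is invariant under the diagonal shift (k, l) \<mapsto> (k + 1, l + 1),
  i.e. a function \<mu> of k - l.\<close>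

lemma shift_invariant_int_fun_const:
  fixes g :: "int \<Rightarrow> 'a"
  assumes "\<And>n. g (n + 1) = g n"
  shows "g n = g 0"
proof (induction n rule: int_induct[where k = 0])
  case base
  show ?case by simp
next
  case (step1 n)
  then show ?case using assms[of n] by simp
next
  case (step2 n)
  then show ?case using assms[of "n - 1"] by simp
qed

lemma int_antidifference_exists:
  fixes a :: "int \<Rightarrow> 'a::ab_group_add"
  shows "\<exists>A. \<forall>k. A (k + 1) = A k + a k"
proof -
  define A where "A k = (if 0 \<le> k then sum a {0..<k} else - sum a {k..<0})" for k
  have "A (k + 1) = A k + a k" for k
  proof -
    consider "0 \<le> k" | "k = -1" | "k < -1" by linarith
    then show ?thesis
    proof cases
      case 1
      then have "{0..<k + 1} = insert k {0..<k}" by auto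
      with 1 show ?thesis by (simp add: A_def add.commute)
    next
      case 2
      then have "{k..<0} = {k}" by auto
      with 2 show ?thesis by (simp add: A_def)
    next
      case 3
      then have "{k..<0} = insert k {k + 1..<0}" by auto
      with 3 show ?thesis by (simp add: A_def)
    qed
  qed
  then show ?thesis by blast
qed

lemma separable_if_mixed_difference_zero:
  fixes g :: "int \<Rightarrow> int \<Rightarrow> 'a::ab_group_add"
  assumes mixed: "\<And>k l. g (k + 1) (l + 1) - g k (l + 1) = g (k + 1) l - g k l"
  shows "g k l = g k 0 + (g 0 l - g 0 0)"
proof -
  have row_step: "g (k + 1) l - g k l = g (k + 1) 0 - g k 0" for k l
    by (rule shift_invariant_int_fun_const[where g = "\<lambda>l. g (k + 1) l - g k l"]) (rule mixed)
  have "g k l - g k 0 = g 0 l - g 0 0"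
  proof (rule shift_invariant_int_fun_const[where g = "\<lambda>k. g k l - g k 0"])
    fix n
    show "g (n + 1) l - g (n + 1) 0 = g n l - g n 0"
      using row_step[of n l] by (simp add: algebra_simps)
  qed
  then show ?thesis by (simp add: algebra_simps)
qed

lemma diagonal_shift_invariant_fun_of_difference:
  fixes h :: "int \<Rightarrow> int \<Rightarrow> 'a"
  assumes "\<And>k l. h (k + 1) (l + 1) = h k l"
  shows "h k l = h (k - l) 0"
proof -
  have "h (d + l) l = h d 0" for d l
    using shift_invariant_int_fun_const[where g = "\<lambda>l. h (d + l) l"] assms
    by (simp add: add.assoc[symmetric])
  from this[of "k - l" l] show ?thesis by simp
qed

theorem proposition8p3:
  fixes f :: "int \<Rightarrow> int \<Rightarrow> 'b::ab_group_add"
  assumes "\<And>k l. f (k + 1) l + f k (l + 1) + f (k - 1) (l - 1)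
                  = f (k - 1) l + f k (l - 1) + f (k + 1) (l + 1)"
  shows "\<exists>kappa lam mu :: int \<Rightarrow> 'b. \<forall>k l. f k l = kappa k + lam l + mu (k - l)"
proof -
  define D where "D k l = f (k + 1) (l + 1) - f k l" for k l
  have "D (k + 1) (l + 1) - D k (l + 1) = D (k + 1) l - D k l" for k l
    using assms[of "k + 1" "l + 1"] by (simp add: D_def algebra_simps)
  then have D_separable: "D k l = D k 0 + (D 0 l - D 0 0)" for k l
    by (rule separable_if_mixed_difference_zero)
  obtain A where A: "\<And>k. A (k + 1) = A k + D k 0"
    using int_antidifference_exists[of "\<lambda>k. D k 0"] by blast
  obtain B where B: "\<And>l. B (l + 1) = B l + (D 0 l - D 0 0)"
    using int_antidifference_exists[of "\<lambda>l. D 0 l - D 0 0"] by blast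
  define h where "h k l = f k l - A k - B l" for k l
  have "h (k + 1) (l + 1) = h k l" for k l
  proof -
    have "h (k + 1) (l + 1) = f (k + 1) (l + 1) - (A k + D k 0) - (B l + (D 0 l - D 0 0))"
      by (simp add: h_def A B)
    also have "\<dots> = h k l"
      using D_def[of k l] D_separable[of k l] by (simp add: h_def algebra_simps)
    finally show ?thesis .
  qed
  then have "h k l = h (k - l) 0" for k l
    by (rule diagonal_shift_invariant_fun_of_difference)
  then have "f k l = A k + B l + h (k - l) 0" for k l
    by (metis h_def diff_add_cancel add.commute add.left_commute)
  then show ?thesis by (intro exI[of _ A] exI[of _ B] exI[of _ "\<lambda>d. h d 0"]) simp
qed

end
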